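(* Let $\mathbf{x}_t=\mathbf{x}+t\mathbf{v}$, $t=1,2,\dots$, with $\mathbf{v}\neq\mathbf{0}$, and let points $\mathbf{o}_q$ (access points) form a homogeneous Poisson point process on $\mathbb{R}^2$ of density $\kappa>0$. For $0<r_0<R$, let $\mathcal{Q}_t$ be the set of points with $r_0\le\|\mathbf{d}_{t,q}\|\le R$, where $\mathbf{d}_{t,q}=\mathbf{x}_t-\mathbf{o}_q$, and let $d_{t,q,1}$ be the component of $\mathbf{d}_{t,q}$ along $\mathbf{v}$. Define $$\tilde{\mathbf{A}}_{T,x}=\sum_{t=1}^T\mathbb{E}\Big\{\sum_{q\in\mathcal{Q}_t}\frac{d_{t,q,1}^2}{\|\mathbf{d}_{t,q}\|^8}\big(\|\mathbf{d}_{t,q}\|^2\mathbf{I}-\mathbf{d}_{t,q}\mathbf{d}_{t,q}^{\mathrm T}\big)\Big\},$$ the expectation being over the point process. Then $\frac1T\lambda_{\min}(\tilde{\mathbf{A}}_{T,x})\to\frac18\pi\kappa\big(\frac1{r_0^2}-\frac1{R^2}\big)$ as $T\to\infty$.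
   Context: The condition $\|\mathbf{d}_{t,q}\|\ge r_0$ encodes the paper's assumption that every access point used at time $t$ is at distance at least $r_0$ from the user. *)

theory Defs
  imports "HOL-Analysis.Analysis" "HOL-Probability.Probability"
begin

definition poisson_point_process ::
  "'s measure \<Rightarrow> ('s \<Rightarrow> (real^2) set) \<Rightarrow> real \<Rightarrow> bool" where
  "poisson_point_process M Phi kappa \<longleftrightarrow>
     prob_space M \<and>
     (\<forall>\<omega>\<in>space M. \<forall>B. bounded B \<longrightarrow> finite (Phi \<omega> \<inter> B)) \<and>
     (\<forall>B. B \<in> sets lborel \<and> bounded B \<longrightarrow>
        (\<lambda>\<omega>. card (Phi \<omega> \<inter> B)) \<in> measurable M (count_space UNIV) \<and>
        (\<forall>k::nat. measure M {\<omega>\<in>space M. card (Phi \<omega> \<inter> B) = k} =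
            (kappa * measure lborel B) ^ k / fact k * exp (- (kappa * measure lborel B)))) \<and>
     (\<forall>(I::nat set) B. finite I \<and> disjoint_family_on B I \<and>
        (\<forall>i\<in>I. B i \<in> sets lborel \<and> bounded (B i)) \<longrightarrow>
        prob_space.indep_vars M (\<lambda>_. count_space UNIV) (\<lambda>i \<omega>. card (Phi \<omega> \<inter> B i)) I)"

definition lambda_min :: "real^'n^'n \<Rightarrow> real" where
  "lambda_min A = Min {l. \<exists>u. u \<noteq> 0 \<and> A *v u = l *\<^sub>R u}"

definition summand :: "real^2 \<Rightarrow> real^2 \<Rightarrow> real^2^2" where
  "summand v d = (((d \<bullet> v) / norm v)\<^sup>2 / norm d ^ 8) *\<^sub>R
      ((norm d)\<^sup>2 *\<^sub>R mat 1 - (\<chi> i j. d $ i * d $ j))"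

definition A_tilde ::
  "'s measure \<Rightarrow> ('s \<Rightarrow> (real^2) set) \<Rightarrow> real \<Rightarrow> real \<Rightarrow> real^2 \<Rightarrow> real^2 \<Rightarrow> nat \<Rightarrow> real^2^2" where
  "A_tilde M Phi r0 R x v T =
     (\<Sum>t=1..T. \<integral>\<omega>. (\<Sum>p\<in>{p \<in> Phi \<omega>. r0 \<le> norm ((x + real t *\<^sub>R v) - p) \<and>
                                     norm ((x + real t *\<^sub>R v) - p) \<le> R}.
                       summand v ((x + real t *\<^sub>R v) - p)) \<partial>M)"

end

theory Submission
  imports Defs
begin

text \<open>By Campbell's formula for the Poisson process, every expectation in \<^term>\<open>A_tilde\<close> equals
kappa times the matrix K obtained by integrating the summand over the annulus r0 <= |e| <= R,
independently of t; hence A_tilde = T kappa K. In the orthonormal frame u = v/|v|, w = u turned by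
a right angle, rotation invariance of Lebesgue measure reduces the entries of K to the annulus
moments of e1^2 e2^2, e1^4 and e1^3 e2 against |e|^-8. Swapping the coordinates, passing to the
diagonal frame and reflecting one axis give two linear relations between the first two moments and
kill the third; with the radial integral of |e|^-4, which is pi (1/r0^2 - 1/R^2), this makes u and w
eigenvectors of K with eigenvalues 1/8 and 3/8 of that value. The radial integral needs no polar
coordinates: additivity and scaling force it to be C (1/a^2 - 1/b^2), and comparison with the area
of thin annuli gives C = pi.\<close>

section \<open>Campbell's formula for the Poisson point process\<close>

lemma poisson_point_processD:
  assumes "poisson_point_process M Phi kappa"
  shows "prob_space M"
    and "\<And>\<omega> B. \<omega> \<in> space M \<Longrightarrow> bounded B \<Longrightarrow> finite (Phi \<omega> \<inter> B)"
    and "\<And>B. B \<in> sets lborel \<Longrightarrow> bounded B \<Longrightarrow>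
           (\<lambda>\<omega>. card (Phi \<omega> \<inter> B)) \<in> measurable M (count_space UNIV)"
    and "\<And>B k. B \<in> sets lborel \<Longrightarrow> bounded B \<Longrightarrow>
           measure M {\<omega>\<in>space M. card (Phi \<omega> \<inter> B) = k} =
             (kappa * measure lborel B) ^ k / fact k * exp (- (kappa * measure lborel B))"
  using assms unfolding poisson_point_process_def by blast+

lemma sums_poisson_mean: "(\<lambda>k. real k * (l ^ k / fact k * exp (- l))) sums l"
proof -
  have "(\<lambda>n. l * exp (- l) * (l ^ n /\<^sub>R fact n)) sums (l * exp (- l) * exp l)"
    by (intro sums_mult exp_converges)
  moreover have "real (Suc n) * (l ^ Suc n / fact (Suc n) * exp (- l)) =
      l * exp (- l) * (l ^ n /\<^sub>R fact n)" for n
    by (simp add: divide_simps del: of_nat_Suc)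
  moreover have "l * exp (- l) * exp l = l"
    by (simp add: exp_minus field_simps)
  ultimately have "(\<lambda>n. real (Suc n) * (l ^ Suc n / fact (Suc n) * exp (- l))) sums l"
    by simp
  then show ?thesis
    using sums_Suc_iff[where f="\<lambda>k. real k * (l ^ k / fact k * exp (- l))"] by simp
qed

lemma poisson_point_process_expected_count:
  assumes P: "poisson_point_process M Phi kappa" and "0 \<le> kappa"
    and B: "B \<in> sets lborel" "bounded B"
  shows "integrable M (\<lambda>\<omega>. real (card (Phi \<omega> \<inter> B)))"
    and "(\<integral>\<omega>. real (card (Phi \<omega> \<inter> B)) \<partial>M) = kappa * measure lborel B"
proof -
  interpret prob_space M using poisson_point_processD(1)[OF P] .
  define N where "N \<omega> = card (Phi \<omega> \<inter> B)" for \<omega>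
  define l where "l = kappa * measure lborel B"
  define A where "A k = {\<omega>\<in>space M. N \<omega> = k}" for k
  have [measurable]: "N \<in> measurable M (count_space UNIV)"
    unfolding N_def using poisson_point_processD(3)[OF P B] .
  have [measurable]: "A k \<in> sets M" for k
    unfolding A_def by measurable
  have "ennreal (real (N \<omega>)) = (\<Sum>k. ennreal (real k) * indicator (A k) \<omega>)" if "\<omega> \<in> space M" for \<omega>
  proof -
    have "(\<lambda>k. ennreal (real k) * indicator (A k) \<omega>) = (\<lambda>k. if k = N \<omega> then ennreal (real k) else 0)"
      using that by (auto simp: A_def)
    then show ?thesis
      using sums_single[of "N \<omega>" "\<lambda>k. ennreal (real k)"] by (simp add: sums_iff)
  qed
  then have "(\<integral>\<^sup>+\<omega>. real (N \<omega>) \<partial>M) = (\<integral>\<^sup>+\<omega>. (\<Sum>k. ennreal (real k) * indicator (A k) \<omega>) \<partial>M)"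
    by (intro nn_integral_cong) auto
  also have "\<dots> = (\<Sum>k. ennreal (real k) * emeasure M (A k))"
    by (simp add: nn_integral_suminf nn_integral_cmult_indicator)
  also have "\<dots> = (\<Sum>k. ennreal (real k * (l ^ k / fact k * exp (- l))))"
    using poisson_point_processD(4)[OF P B]
    by (simp add: emeasure_eq_measure A_def N_def l_def flip: ennreal_mult')
  also have "\<dots> = ennreal l"
    using sums_poisson_mean[of l] assms(2) by (subst suminf_ennreal2) (auto simp: sums_iff l_def)
  finally have nn: "(\<integral>\<^sup>+\<omega>. real (N \<omega>) \<partial>M) = ennreal l" .
  have "0 \<le> l" using assms(2) by (simp add: l_def)
  then show "integrable M (\<lambda>\<omega>. real (card (Phi \<omega> \<inter> B)))"
    and "(\<integral>\<omega>. real (card (Phi \<omega> \<inter> B)) \<partial>M) = kappa * measure lborel B"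
    unfolding N_def[symmetric] l_def[symmetric]
    by (auto intro!: integrableI_nonneg simp: nn integral_eq_nn_integral)
qed

lemma sum_regroup_by_values:
  fixes F :: "'a \<Rightarrow> 'b::real_vector"
  assumes "finite A" "finite Y" "F ` A \<subseteq> Y"
  shows "(\<Sum>p\<in>A. F p) = (\<Sum>y\<in>Y. real (card (A \<inter> F -` {y})) *\<^sub>R y)"
proof -
  have "(\<Sum>p\<in>A. F p) = (\<Sum>p\<in>A. \<Sum>y\<in>Y. if F p = y then y else 0)"
    using assms(2,3) by (intro sum.cong) (auto simp: sum.delta)
  also have "\<dots> = (\<Sum>y\<in>Y. \<Sum>p\<in>A. if F p = y then y else 0)"
    by (rule sum.swap)
  also have "\<dots> = (\<Sum>y\<in>Y. real (card (A \<inter> F -` {y})) *\<^sub>R y)"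
    using assms(1) by (intro sum.cong refl) (simp add: sum.inter_filter[symmetric] Int_def sum_constant_scaleR)
  finally show ?thesis .
qed

lemma campbell_formula_simple:
  fixes F :: "real^2 \<Rightarrow> 'b::{banach, second_countable_topology}"
  assumes P: "poisson_point_process M Phi kappa" and kappa: "0 \<le> kappa"
    and S: "S \<in> sets borel" "bounded S"
    and F: "simple_function lborel F" and F_outside: "\<And>p. p \<notin> S \<Longrightarrow> F p = 0"
  shows "integrable M (\<lambda>\<omega>. \<Sum>p\<in>Phi \<omega> \<inter> S. F p)"
    and "(\<integral>\<omega>. (\<Sum>p\<in>Phi \<omega> \<inter> S. F p) \<partial>M) = kappa *\<^sub>R (\<integral>p. F p \<partial>lborel)"
proof -
  interpret prob_space M using poisson_point_processD(1)[OF P] .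
  define Y where "Y = range F"
  define C where "C y = S \<inter> F -` {y}" for y
  have Y: "finite Y"
    using F by (simp add: simple_function_def Y_def)
  have C: "C y \<in> sets lborel" "bounded (C y)" for y
    using S simple_functionD(2)[OF F, of "{y}"] by (auto simp: C_def intro: bounded_subset)
  have regrouped: "(\<Sum>p\<in>Phi \<omega> \<inter> S. F p) = (\<Sum>y\<in>Y. real (card (Phi \<omega> \<inter> C y)) *\<^sub>R y)"
    if "\<omega> \<in> space M" for \<omega>
    using sum_regroup_by_values[of "Phi \<omega> \<inter> S" Y F] Y poisson_point_processD(2)[OF P that S(2)]
    by (simp add: Y_def C_def Int_assoc image_subset_iff)
  have card_integrable: "integrable M (\<lambda>\<omega>. real (card (Phi \<omega> \<inter> C y)))" for y
    using poisson_point_process_expected_count(1)[OF P kappa C] .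
  have "integrable M (\<lambda>\<omega>. \<Sum>p\<in>Phi \<omega> \<inter> S. F p) \<longleftrightarrow>
      integrable M (\<lambda>\<omega>. \<Sum>y\<in>Y. real (card (Phi \<omega> \<inter> C y)) *\<^sub>R y)"
    using regrouped by (intro Bochner_Integration.integrable_cong) auto
  then show "integrable M (\<lambda>\<omega>. \<Sum>p\<in>Phi \<omega> \<inter> S. F p)"
    using card_integrable by auto
  have "F p = (\<Sum>y\<in>Y. indicator (C y) p *\<^sub>R y)" for p
  proof (cases "p \<in> S")
    case True
    then have "(\<Sum>y\<in>Y. indicator (C y) p *\<^sub>R y) = (\<Sum>y\<in>Y. if y = F p then y else 0)"
      by (intro sum.cong) (auto simp: C_def)
    then show ?thesis
      using sum.delta[OF Y, of "F p" "\<lambda>y. y"] by (simp add: Y_def)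
  qed (simp add: C_def F_outside)
  moreover have "has_bochner_integral lborel (\<lambda>p. \<Sum>y\<in>Y. indicator (C y) p *\<^sub>R y)
      (\<Sum>y\<in>Y. measure lborel (C y) *\<^sub>R y)"
    using C by (intro has_bochner_integral_sum has_bochner_integral_indicator emeasure_bounded_finite) auto
  ultimately have "(\<integral>p. F p \<partial>lborel) = (\<Sum>y\<in>Y. measure lborel (C y) *\<^sub>R y)"
    by (simp add: has_bochner_integral_integral_eq)
  moreover have "(\<integral>\<omega>. (\<Sum>p\<in>Phi \<omega> \<inter> S. F p) \<partial>M) = (\<Sum>y\<in>Y. (kappa * measure lborel (C y)) *\<^sub>R y)"
    using card_integrable
    by (simp add: regrouped Bochner_Integration.integral_cong[OF refl regrouped]
        poisson_point_process_expected_count(2)[OF P kappa C])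
  ultimately show "(\<integral>\<omega>. (\<Sum>p\<in>Phi \<omega> \<inter> S. F p) \<partial>M) = kappa *\<^sub>R (\<integral>p. F p \<partial>lborel)"
    by (simp add: scaleR_sum_right)
qed

theorem campbell_formula:
  fixes h :: "real^2 \<Rightarrow> 'b::{banach, second_countable_topology}"
  assumes P: "poisson_point_process M Phi kappa" and kappa: "0 \<le> kappa"
    and S: "S \<in> sets borel" "bounded S"
    and h[measurable]: "h \<in> borel_measurable borel"
    and h_outside: "\<And>p. p \<notin> S \<Longrightarrow> h p = 0" and h_bound: "\<And>p. norm (h p) \<le> B"
  shows "integrable M (\<lambda>\<omega>. \<Sum>p\<in>Phi \<omega> \<inter> S. h p)"
    and "(\<integral>\<omega>. (\<Sum>p\<in>Phi \<omega> \<inter> S. h p) \<partial>M) = kappa *\<^sub>R (\<integral>p. h p \<partial>lborel)"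
proof -
  interpret prob_space M using poisson_point_processD(1)[OF P] .
  obtain F where F_simple: "\<And>i. simple_function lborel (F i)"
    and F_lim: "\<And>p. (\<lambda>i. F i p) \<longlonglongrightarrow> h p"
    and F_dist: "\<And>i p. dist (F i p) 0 \<le> 2 * dist (h p) 0"
    using borel_measurable_implies_sequence_metric[of h lborel 0] by auto
  have F_bound: "norm (F i p) \<le> 2 * B * indicator S p" for i p
    using F_dist[of i p] h_bound[of p] h_outside[of p] by (cases "p \<in> S") auto
  have F_outside: "F i p = 0" if "p \<notin> S" for i p
    using F_bound[of i p] that by simp
  have F_integrable: "integrable M (\<lambda>\<omega>. \<Sum>p\<in>Phi \<omega> \<inter> S. F i p)"
    and F_expectation: "(\<integral>\<omega>. (\<Sum>p\<in>Phi \<omega> \<inter> S. F i p) \<partial>M) = kappa *\<^sub>R (\<integral>p. F i p \<partial>lborel)" for i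
    using campbell_formula_simple[OF P kappa S F_simple F_outside] by auto
  define N where "N \<omega> = real (card (Phi \<omega> \<inter> S))" for \<omega>
  have dominating: "integrable M (\<lambda>\<omega>. 2 * B * N \<omega>)"
    unfolding N_def using poisson_point_process_expected_count(1)[OF P kappa _ S(2)] S(1) by simp
  have random_sum_bound: "norm (\<Sum>p\<in>Phi \<omega> \<inter> S. F i p) \<le> 2 * B * N \<omega>" for i \<omega>
  proof -
    have "norm (\<Sum>p\<in>Phi \<omega> \<inter> S. F i p) \<le> (\<Sum>p\<in>Phi \<omega> \<inter> S. 2 * B)"
      using F_bound by (intro sum_norm_le) (metis IntD2 indicator_simps(1) mult.right_neutral)
    then show ?thesis by (simp add: N_def mult.commute)
  qed
  have random_sum_lim: "(\<lambda>i. \<Sum>p\<in>Phi \<omega> \<inter> S. F i p) \<longlonglongrightarrow> (\<Sum>p\<in>Phi \<omega> \<inter> S. h p)" for \<omega>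
    by (intro tendsto_sum F_lim)
  have F_meas: "(\<lambda>\<omega>. \<Sum>p\<in>Phi \<omega> \<inter> S. F i p) \<in> borel_measurable M" for i
    using F_integrable by auto
  have h_sum_meas: "(\<lambda>\<omega>. \<Sum>p\<in>Phi \<omega> \<inter> S. h p) \<in> borel_measurable M"
    by (rule borel_measurable_LIMSEQ_metric[OF F_meas random_sum_lim])
  show "integrable M (\<lambda>\<omega>. \<Sum>p\<in>Phi \<omega> \<inter> S. h p)"
    using random_sum_lim random_sum_bound
    by (intro integrable_dominated_convergence[where s="\<lambda>i \<omega>. \<Sum>p\<in>Phi \<omega> \<inter> S. F i p", OF h_sum_meas F_meas dominating]) auto
  have "(\<lambda>i. \<integral>\<omega>. (\<Sum>p\<in>Phi \<omega> \<inter> S. F i p) \<partial>M) \<longlonglongrightarrow> (\<integral>\<omega>. (\<Sum>p\<in>Phi \<omega> \<inter> S. h p) \<partial>M)"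
    using random_sum_lim random_sum_bound
    by (intro integral_dominated_convergence[where s="\<lambda>i \<omega>. \<Sum>p\<in>Phi \<omega> \<inter> S. F i p", OF h_sum_meas F_meas dominating]) auto
  moreover have "(\<lambda>i. \<integral>\<omega>. (\<Sum>p\<in>Phi \<omega> \<inter> S. F i p) \<partial>M) \<longlonglongrightarrow> kappa *\<^sub>R (\<integral>p. h p \<partial>lborel)"
  proof -
    have "(\<lambda>i. \<integral>p. F i p \<partial>lborel) \<longlonglongrightarrow> (\<integral>p. h p \<partial>lborel)"
    proof (rule integral_dominated_convergence[where w="\<lambda>p. 2 * B * indicator S p"])
      show "integrable lborel (\<lambda>p. 2 * B * indicator S p)"
        using S by (intro integrable_mult_right integrable_real_indicator emeasure_bounded_finite) auto
      show "AE p in lborel. norm (F i p) \<le> 2 * B * indicator S p" for i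
        using F_bound by (intro AE_I2)
    qed (use F_lim borel_measurable_simple_function[OF F_simple] in auto)
    then show ?thesis
      unfolding F_expectation by (intro tendsto_scaleR tendsto_const)
  qed
  ultimately show "(\<integral>\<omega>. (\<Sum>p\<in>Phi \<omega> \<inter> S. h p) \<partial>M) = kappa *\<^sub>R (\<integral>p. h p \<partial>lborel)"
    by (rule LIMSEQ_unique)
qed

section \<open>Invariance of Lebesgue measure\<close>

lemma borel_measurable_orthogonal_transformation:
  fixes f :: "'a::euclidean_space \<Rightarrow> 'a"
  shows "orthogonal_transformation f \<Longrightarrow> f \<in> borel_measurable borel"
  by (intro borel_measurable_continuous_onI linear_continuous_on
      linear_conv_bounded_linear[THEN iffD1] orthogonal_transformation_linear)

lemma lborel_distr_orthogonal_transformation: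
  fixes f :: "real^'n::{finite,wellorder} \<Rightarrow> real^'n::_"
  assumes f: "orthogonal_transformation f"
  shows "distr lborel borel f = lborel"
proof (rule lborel_eqI[symmetric])
  fix l u :: "real^'n::_"
  assume le: "\<And>b. b \<in> Basis \<Longrightarrow> l \<bullet> b \<le> u \<bullet> b"
  note [measurable] = borel_measurable_orthogonal_transformation[OF f]
  have preimage: "f -` box l u = inv f ` box l u"
    using f by (simp add: bij_vimage_eq_inv_image orthogonal_transformation_bij)
  have "f -` box l u \<in> sets borel"
    using measurable_sets[of f borel borel "box l u"] by simp
  then have "emeasure (distr lborel borel f) (box l u) = emeasure lebesgue (f -` box l u)"
    by (simp add: emeasure_distr)
  also have "\<dots> = measure lebesgue (inv f ` box l u)"
    using f unfolding preimage
    by (intro emeasure_eq_measure2 measurable_orthogonal_image orthogonal_transformation_inv lmeasurable_box)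
  also have "\<dots> = measure lebesgue (box l u)"
    using measure_orthogonal_image[OF orthogonal_transformation_inv[OF f] lmeasurable_box] by simp
  also have "\<dots> = (\<Prod>b\<in>Basis. (u - l) \<bullet> b)"
    using le by (simp add: measure_lborel_box_eq prod_nonneg)
  finally show "emeasure (distr lborel borel f) (box l u) = (\<Prod>b\<in>Basis. (u - l) \<bullet> b)" .
qed simp

lemma lborel_integral_orthogonal_transformation:
  fixes f :: "real^'n::{finite,wellorder} \<Rightarrow> real^'n::_"
    and h :: "real^'n::_ \<Rightarrow> 'b::{banach, second_countable_topology}"
  assumes f: "orthogonal_transformation f" and [measurable]: "h \<in> borel_measurable borel"
  shows "(\<integral>x. h (f x) \<partial>lborel) = (\<integral>x. h x \<partial>lborel)"
proof -
  note [measurable] = borel_measurable_orthogonal_transformation[OF f]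
  have "(\<integral>x. h (f x) \<partial>lborel) = (\<integral>x. h x \<partial>distr lborel borel f)"
    by (simp add: integral_distr)
  then show ?thesis
    by (simp add: lborel_distr_orthogonal_transformation[OF f])
qed

lemma lborel_integral_reflect:
  fixes h :: "'a::euclidean_space \<Rightarrow> 'b::{banach, second_countable_topology}"
  assumes [measurable]: "h \<in> borel_measurable borel"
  shows "(\<integral>x. h (t - x) \<partial>lborel) = (\<integral>x. h x \<partial>lborel)"
proof -
  have "(\<integral>x. h x \<partial>lborel) = (\<integral>x. h x \<partial>distr lborel borel (\<lambda>x. t + (-1) *\<^sub>R x))"
    by (subst lborel_affine[of "-1" t]) (simp_all add: density_1)
  then show ?thesis
    by (simp add: integral_distr)
qed

lemma lborel_integral_scale:
  fixes h :: "'a::euclidean_space \<Rightarrow> real"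
  assumes "0 < c" and [measurable]: "h \<in> borel_measurable borel"
  shows "(\<integral>x. h x \<partial>lborel) = c ^ DIM('a) * (\<integral>x. h (c *\<^sub>R x) \<partial>lborel)"
proof -
  have "(\<integral>x. h x \<partial>lborel) =
      (\<integral>x. h x \<partial>density (distr lborel borel (\<lambda>x. 0 + c *\<^sub>R x)) (\<lambda>_. \<bar>c\<bar> ^ DIM('a)))"
    using assms(1) by (subst lborel_affine[of c 0]) simp_all
  also have "\<dots> = c ^ DIM('a) * (\<integral>x. h (c *\<^sub>R x) \<partial>lborel)"
    using assms(1) by (simp add: integral_density integral_distr)
  finally show ?thesis .
qed

section \<open>Integrals over annuli\<close>

definition annulus :: "real \<Rightarrow> real \<Rightarrow> (real^2) set" where
  "annulus a b = {e. a \<le> norm e \<and> norm e \<le> b}"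

definition annulus_integral :: "real \<Rightarrow> real \<Rightarrow> (real^2 \<Rightarrow> real) \<Rightarrow> real" where
  "annulus_integral a b f = (\<integral>e. indicator (annulus a b) e * f e \<partial>lborel)"

lemma annulus_eq: "annulus a b = cball 0 b - ball 0 a"
  by (auto simp: annulus_def)

lemma annulus_sets [measurable]: "annulus a b \<in> sets borel"
  unfolding annulus_eq by measurable

lemma compact_annulus: "compact (annulus a b)"
  unfolding annulus_eq by (intro compact_diff) auto

lemma measure_annulus:
  assumes "0 \<le> a" "a \<le> b"
  shows "measure lborel (annulus a b) = pi * (b\<^sup>2 - a\<^sup>2)"
proof -
  have "measure lborel (annulus a b) = measure lborel (cball (0::real^2) b) - measure lborel (ball (0::real^2) a)"
    unfolding annulus_eq by (rule measure_Diff) (use assms in \<open>auto simp: emeasure_cball\<close>)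
  then show ?thesis
    using assms content_cball[of b "0::real^2"] circle_area[of a "0::real^2"]
    by (simp add: unit_ball_vol_2 algebra_simps power2_eq_square)
qed

lemma integrable_annulus:
  fixes f :: "real^2 \<Rightarrow> real"
  assumes "continuous_on (annulus a b) f"
  shows "integrable lborel (\<lambda>e. indicator (annulus a b) e * f e)"
  using borel_integrable_compact[OF compact_annulus assms] by simp

lemma annulus_integral_add:
  assumes "continuous_on (annulus a b) f" "continuous_on (annulus a b) g"
  shows "annulus_integral a b (\<lambda>e. f e + g e) = annulus_integral a b f + annulus_integral a b g"
  unfolding annulus_integral_def distrib_left
  using assms by (intro Bochner_Integration.integral_add integrable_annulus)

lemma annulus_integral_cmult: "annulus_integral a b (\<lambda>e. c * f e) = c * annulus_integral a b f"
  unfolding annulus_integral_def by (simp add: mult.left_commute)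

lemma annulus_integral_mono:
  assumes "continuous_on (annulus a b) f" "continuous_on (annulus a b) g"
    and "\<And>e. e \<in> annulus a b \<Longrightarrow> f e \<le> g e"
  shows "annulus_integral a b f \<le> annulus_integral a b g"
  unfolding annulus_integral_def using assms
  by (intro integral_mono integrable_annulus) (auto simp: indicator_def)

lemma annulus_integral_const:
  assumes "0 \<le> a" "a \<le> b"
  shows "annulus_integral a b (\<lambda>_. c) = c * pi * (b\<^sup>2 - a\<^sup>2)"
  using assms by (simp add: annulus_integral_def measure_annulus)

lemma annulus_integral_orthogonal_transformation:
  assumes g: "orthogonal_transformation g" and [measurable]: "f \<in> borel_measurable borel"
  shows "annulus_integral a b (\<lambda>e. f (g e)) = annulus_integral a b f"
proof -
  have "indicator (annulus a b) (g e) = (indicator (annulus a b) e :: real)" for e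
    using g by (simp add: annulus_def indicator_def orthogonal_transformation_norm)
  then show ?thesis
    unfolding annulus_integral_def
    using lborel_integral_orthogonal_transformation[OF g, of "\<lambda>e. indicator (annulus a b) e * f e"]
    by simp
qed

lemma annulus_integral_split:
  assumes "a \<le> b" "b \<le> c" and f: "continuous_on (annulus a c) f"
  shows "annulus_integral a c f = annulus_integral a b f + annulus_integral b c f"
proof -
  have "sphere (0::real^2) b \<in> null_sets lborel"
    using negligible_sphere[of "0::real^2" b]
    by (auto simp: null_sets_completion_iff negligible_iff_null_sets negligible_convex_frontier)
  then have "AE e in lborel. indicator (annulus a c) e * f e =
      indicator (annulus a b) e * f e + indicator (annulus b c) e * f e"
    by (rule AE_not_in[THEN AE_mp]) (use assms in \<open>auto simp: annulus_def indicator_def\<close>)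
  moreover have "integrable lborel (\<lambda>e. indicator (annulus x y) e * f e)"
    if "a \<le> x" "y \<le> c" for x y
    using assms that
    by (intro integrable_annulus continuous_on_subset[OF f]) (auto simp: annulus_def)
  ultimately have "annulus_integral a c f =
      (\<integral>e. indicator (annulus a b) e * f e + indicator (annulus b c) e * f e \<partial>lborel)"
    unfolding annulus_integral_def using assms by (intro integral_cong_AE) auto
  also have "\<dots> = annulus_integral a b f + annulus_integral b c f"
    unfolding annulus_integral_def using assms
    by (intro Bochner_Integration.integral_add integrable_annulus continuous_on_subset[OF f])
      (auto simp: annulus_def)
  finally show ?thesis .
qed

lemma annulus_integral_scale:
  assumes "0 < c" and [measurable]: "f \<in> borel_measurable borel"
  shows "annulus_integral (c * a) (c * b) f = c\<^sup>2 * annulus_integral a b (\<lambda>e. f (c *\<^sub>R e))"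
proof -
  have "indicator (annulus (c * a) (c * b)) (c *\<^sub>R e) = (indicator (annulus a b) e :: real)" for e
    using assms(1) by (simp add: annulus_def indicator_def)
  then show ?thesis
    unfolding annulus_integral_def
    using lborel_integral_scale[OF assms(1), of "\<lambda>e. indicator (annulus (c * a) (c * b)) e * f e"]
    by simp
qed

lemma continuous_on_inverse_pow_annulus:
  "0 < a \<Longrightarrow> continuous_on (annulus a b) (\<lambda>e. c / norm e ^ n)"
  by (intro continuous_intros) (auto simp: annulus_def)

lemma annulus_integral_inverse_pow4_scale:
  assumes "0 < c"
  shows "annulus_integral (c * a) (c * b) (\<lambda>e. 1 / norm e ^ 4) =
    annulus_integral a b (\<lambda>e. 1 / norm e ^ 4) / c\<^sup>2"
proof -
  have "annulus_integral (c * a) (c * b) (\<lambda>e. 1 / norm e ^ 4) =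
      c\<^sup>2 * annulus_integral a b (\<lambda>e. 1 / norm (c *\<^sub>R e) ^ 4)"
    by (rule annulus_integral_scale[OF assms]) measurable
  also have "(\<lambda>e::real^2. 1 / norm (c *\<^sub>R e) ^ 4) = (\<lambda>e. 1 / c ^ 4 * (1 / norm e ^ 4))"
    using assms by (simp add: power_mult_distrib)
  also have "c\<^sup>2 * annulus_integral a b (\<lambda>e. 1 / c ^ 4 * (1 / norm e ^ 4)) =
      annulus_integral a b (\<lambda>e. 1 / norm e ^ 4) / c\<^sup>2"
    unfolding annulus_integral_cmult using assms by (simp add: field_simps power2_eq_square power4_eq_xxxx)
  finally show ?thesis .
qed

lemma annulus_integral_inverse_pow4_bounds:
  assumes "0 < a" "a \<le> b"
  shows "pi * (b\<^sup>2 - a\<^sup>2) / b ^ 4 \<le> annulus_integral a b (\<lambda>e. 1 / norm e ^ 4)"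
    and "annulus_integral a b (\<lambda>e. 1 / norm e ^ 4) \<le> pi * (b\<^sup>2 - a\<^sup>2) / a ^ 4"
proof -
  have "annulus_integral a b (\<lambda>_. 1 / b ^ 4) \<le> annulus_integral a b (\<lambda>e. 1 / norm e ^ 4)"
    using assms continuous_on_inverse_pow_annulus[OF assms(1)]
    by (intro annulus_integral_mono) (auto simp: annulus_def intro!: frac_le power_mono)
  then show "pi * (b\<^sup>2 - a\<^sup>2) / b ^ 4 \<le> annulus_integral a b (\<lambda>e. 1 / norm e ^ 4)"
    using assms by (simp add: annulus_integral_const)
  have "annulus_integral a b (\<lambda>e. 1 / norm e ^ 4) \<le> annulus_integral a b (\<lambda>_. 1 / a ^ 4)"
    using assms continuous_on_inverse_pow_annulus[OF assms(1)]
    by (intro annulus_integral_mono) (auto simp: annulus_def intro!: frac_le power_mono)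
  then show "annulus_integral a b (\<lambda>e. 1 / norm e ^ 4) \<le> pi * (b\<^sup>2 - a\<^sup>2) / a ^ 4"
    using assms by (simp add: annulus_integral_const)
qed

lemma annulus_integral_inverse_pow4_one:
  assumes "1 \<le> s"
  shows "annulus_integral 1 s (\<lambda>e. 1 / norm e ^ 4) =
    4 / 3 * annulus_integral 1 2 (\<lambda>e. 1 / norm e ^ 4) * (1 - 1 / s\<^sup>2)"
proof -
  define J where "J t = annulus_integral 1 t (\<lambda>e. 1 / norm e ^ 4)" for t
  have mult: "J (t * u) = J t + J u / t\<^sup>2" if "1 \<le> t" "1 \<le> u" for t u
  proof -
    have "J (t * u) = J t + annulus_integral t (t * u) (\<lambda>e. 1 / norm e ^ 4)"
      unfolding J_def using that
      by (intro annulus_integral_split continuous_on_inverse_pow_annulus) auto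
    also have "annulus_integral t (t * u) (\<lambda>e. 1 / norm e ^ 4) = J u / t\<^sup>2"
      using annulus_integral_inverse_pow4_scale[of t 1 u] that by (simp add: J_def)
    finally show ?thesis .
  qed
  \<comment> \<open>the two factorisations of 2 s determine J up to the constant J 2\<close>
  have "J s + J 2 / s\<^sup>2 = J 2 + J s / 4"
    using mult[of s 2] mult[of 2 s] assms by (simp add: mult.commute)
  then have "J s * (3 / 4) = J 2 * (1 - 1 / s\<^sup>2)"
    by (simp add: algebra_simps)
  then show ?thesis
    unfolding J_def by simp
qed

lemma annulus_integral_inverse_pow4_one_two:
  "annulus_integral 1 2 (\<lambda>e. 1 / norm e ^ 4) = 3 * pi / 4"
proof -
  define C where "C = 4 / 3 * annulus_integral 1 2 (\<lambda>e. 1 / norm e ^ 4)"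
  have bounds: "pi / s\<^sup>2 \<le> C \<and> C \<le> pi * s\<^sup>2" if "1 < s" for s
  proof -
    define q where "q = (s\<^sup>2 - 1) / s\<^sup>2"
    have q: "0 < q"
      using that by (simp add: q_def one_less_power)
    have "annulus_integral 1 s (\<lambda>e. 1 / norm e ^ 4) = C * q"
      using annulus_integral_inverse_pow4_one[of s] that by (simp add: C_def q_def field_simps)
    moreover have "pi * (s\<^sup>2 - 1\<^sup>2) / s ^ 4 = pi / s\<^sup>2 * q" "pi * (s\<^sup>2 - 1\<^sup>2) / 1 ^ 4 = pi * s\<^sup>2 * q"
      using that by (simp_all add: q_def field_simps power2_eq_square power4_eq_xxxx)
    ultimately have "pi / s\<^sup>2 * q \<le> C * q" "C * q \<le> pi * s\<^sup>2 * q"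
      using annulus_integral_inverse_pow4_bounds[of 1 s] that by auto
    then show ?thesis
      using q by (meson mult_right_le_imp_le)
  qed
  have ev: "eventually (\<lambda>s. pi / s\<^sup>2 \<le> C \<and> C \<le> pi * s\<^sup>2) (at_right (1::real))"
    using eventually_at_right_less[of "1::real"] by (rule eventually_mono) (rule bounds)
  have "((\<lambda>s. pi * s\<^sup>2) \<longlongrightarrow> pi * 1\<^sup>2) (at_right (1::real))"
    by (intro tendsto_intros)
  then have "C \<le> pi"
    using ev by (intro tendsto_lowerbound[where f="\<lambda>s. pi * s\<^sup>2"]) (auto elim: eventually_mono)
  moreover have "((\<lambda>s. pi / s\<^sup>2) \<longlongrightarrow> pi / 1\<^sup>2) (at_right (1::real))"
    by (intro tendsto_intros) simp
  then have "pi \<le> C"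
    using ev by (intro tendsto_upperbound[where f="\<lambda>s. pi / s\<^sup>2"]) (auto elim: eventually_mono)
  ultimately show ?thesis
    unfolding C_def by linarith
qed

lemma annulus_integral_inverse_pow4:
  assumes "0 < a" "a \<le> b"
  shows "annulus_integral a b (\<lambda>e. 1 / norm e ^ 4) = pi * (1 / a\<^sup>2 - 1 / b\<^sup>2)"
proof -
  have "annulus_integral a b (\<lambda>e. 1 / norm e ^ 4) = annulus_integral 1 (b / a) (\<lambda>e. 1 / norm e ^ 4) / a\<^sup>2"
    using annulus_integral_inverse_pow4_scale[of a 1 "b / a"] assms by simp
  also have "\<dots> = pi * (1 - 1 / (b / a)\<^sup>2) / a\<^sup>2"
    using annulus_integral_inverse_pow4_one[of "b / a"] annulus_integral_inverse_pow4_one_two assms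
    by simp
  also have "\<dots> = pi * (1 / a\<^sup>2 - 1 / b\<^sup>2)"
    using assms by (simp add: field_simps)
  finally show ?thesis .
qed

lemma inner_vec2: "(x::real^2) \<bullet> y = x$1 * y$1 + x$2 * y$2"
  by (simp add: inner_vec_def sum_2)

lemma orthonormal2_decomposition:
  fixes u w :: "real^2"
  assumes "u \<bullet> u = 1" "w \<bullet> w = 1" "u \<bullet> w = 0"
  shows "z = (z \<bullet> u) *\<^sub>R u + (z \<bullet> w) *\<^sub>R w"
proof -
  have "u$1 * u$1 + w$1 * w$1 = 1" "u$1 * u$2 + w$1 * w$2 = 0" "u$2 * u$2 + w$2 * w$2 = 1"
    using assms unfolding inner_vec2 by algebra+
  then have "z$1 = (z \<bullet> u) * u$1 + (z \<bullet> w) * w$1" "z$2 = (z \<bullet> u) * u$2 + (z \<bullet> w) * w$2"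
    unfolding inner_vec2 by algebra+
  then show ?thesis
    by (simp add: vec_eq_iff forall_2)
qed

lemma orthonormal2_parseval:
  fixes u w :: "real^2"
  assumes "u \<bullet> u = 1" "w \<bullet> w = 1" "u \<bullet> w = 0"
  shows "x \<bullet> y = (x \<bullet> u) * (y \<bullet> u) + (x \<bullet> w) * (y \<bullet> w)"
  using arg_cong[OF orthonormal2_decomposition[OF assms, of x], of "\<lambda>z. z \<bullet> y"]
  by (simp add: inner_add_left inner_add_right inner_commute)

lemma orthogonal_transformation_orthonormal2_coordinates:
  fixes u w :: "real^2"
  assumes "u \<bullet> u = 1" "w \<bullet> w = 1" "u \<bullet> w = 0"
  shows "orthogonal_transformation (\<lambda>e. vector [e \<bullet> u, e \<bullet> w] :: real^2)"
  unfolding orthogonal_transformation_def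
proof (intro conjI allI)
  show "linear (\<lambda>e. vector [e \<bullet> u, e \<bullet> w] :: real^2)"
    by (rule linearI) (simp_all add: vec_eq_iff forall_2 inner_add_left)
  show "vector [x \<bullet> u, x \<bullet> w] \<bullet> (vector [y \<bullet> u, y \<bullet> w] :: real^2) = x \<bullet> y" for x y
    using orthonormal2_parseval[OF assms, of x y] by (simp add: inner_vec2)
qed

lemma annulus_integral_change_frame:
  fixes u w :: "real^2" and F :: "real \<Rightarrow> real \<Rightarrow> real"
  assumes "u \<bullet> u = 1" "w \<bullet> w = 1" "u \<bullet> w = 0"
    and [measurable]: "(\<lambda>e::real^2. F (e$1) (e$2)) \<in> borel_measurable borel"
  shows "annulus_integral a b (\<lambda>e. F (e \<bullet> u) (e \<bullet> w) / norm e ^ 8) =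
    annulus_integral a b (\<lambda>e. F (e$1) (e$2) / norm e ^ 8)"
proof -
  note g = orthogonal_transformation_orthonormal2_coordinates[OF assms(1-3)]
  have "norm (vector [e \<bullet> u, e \<bullet> w] :: real^2) = norm e" for e
    using orthogonal_transformation_norm[OF g] by blast
  then show ?thesis
    using annulus_integral_orthogonal_transformation[OF g, of "\<lambda>e. F (e$1) (e$2) / norm e ^ 8" a b]
    by simp
qed

lemma norm_vec2_squared: "(norm (e::real^2))\<^sup>2 = (e$1)\<^sup>2 + (e$2)\<^sup>2"
  unfolding power2_norm_eq_inner by (simp add: inner_vec2 power2_eq_square)

lemma annulus_integral_quartic:
  assumes "0 < a"
  shows "annulus_integral a b (\<lambda>e. (\<alpha> * (e$1)^4 + \<beta> * ((e$1)\<^sup>2 * (e$2)\<^sup>2) + \<gamma> * (e$2)^4) / norm e ^ 8) =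
    \<alpha> * annulus_integral a b (\<lambda>e. (e$1)^4 / norm e ^ 8) +
    \<beta> * annulus_integral a b (\<lambda>e. (e$1)\<^sup>2 * (e$2)\<^sup>2 / norm e ^ 8) +
    \<gamma> * annulus_integral a b (\<lambda>e. (e$2)^4 / norm e ^ 8)"
proof -
  define p m q :: "real^2 \<Rightarrow> real"
    where "p e = (e$1)^4 / norm e ^ 8" and "m e = (e$1)\<^sup>2 * (e$2)\<^sup>2 / norm e ^ 8"
      and "q e = (e$2)^4 / norm e ^ 8" for e
  have cont: "continuous_on (annulus a b) (\<lambda>e. c * f e)" if "f \<in> {p, m, q}" for c f
    using that assms unfolding p_def m_def q_def by (auto intro!: continuous_intros simp: annulus_def)
  have "annulus_integral a b (\<lambda>e. (\<alpha> * (e$1)^4 + \<beta> * ((e$1)\<^sup>2 * (e$2)\<^sup>2) + \<gamma> * (e$2)^4) / norm e ^ 8) =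
      annulus_integral a b (\<lambda>e. (\<alpha> * p e + \<beta> * m e) + \<gamma> * q e)"
    unfolding p_def m_def q_def by (simp add: add_divide_distrib)
  also have "\<dots> = annulus_integral a b (\<lambda>e. \<alpha> * p e + \<beta> * m e) + annulus_integral a b (\<lambda>e. \<gamma> * q e)"
    using cont by (intro annulus_integral_add continuous_on_add) auto
  also have "annulus_integral a b (\<lambda>e. \<alpha> * p e + \<beta> * m e) =
      annulus_integral a b (\<lambda>e. \<alpha> * p e) + annulus_integral a b (\<lambda>e. \<beta> * m e)"
    using cont by (intro annulus_integral_add) auto
  finally show ?thesis
    unfolding annulus_integral_cmult p_def m_def q_def .
qed

lemma annulus_moments:
  assumes "0 < a" "a \<le> b"
  shows "annulus_integral a b (\<lambda>e. (e$1)\<^sup>2 * (e$2)\<^sup>2 / norm e ^ 8) = pi * (1 / a\<^sup>2 - 1 / b\<^sup>2) / 8"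
    and "annulus_integral a b (\<lambda>e. (e$1)^4 / norm e ^ 8) = 3 * pi * (1 / a\<^sup>2 - 1 / b\<^sup>2) / 8"
    and "annulus_integral a b (\<lambda>e. (e$1)^3 * e$2 / norm e ^ 8) = 0"
proof -
  define P M Q X
    where "P = annulus_integral a b (\<lambda>e. (e$1)^4 / norm e ^ 8)"
      and "M = annulus_integral a b (\<lambda>e. (e$1)\<^sup>2 * (e$2)\<^sup>2 / norm e ^ 8)"
      and "Q = annulus_integral a b (\<lambda>e. (e$2)^4 / norm e ^ 8)"
      and "X = annulus_integral a b (\<lambda>e. (e$1)^3 * e$2 / norm e ^ 8)"
  have "Q = P"
    using annulus_integral_change_frame[of "vector [0, 1]" "vector [1, 0]" "\<lambda>x y. x^4" a b]
    by (simp add: P_def Q_def inner_vec2)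
  have "(\<lambda>e::real^2. (1 * (e$1)^4 + 2 * ((e$1)\<^sup>2 * (e$2)\<^sup>2) + 1 * (e$2)^4) / norm e ^ 8) =
      (\<lambda>e. 1 / norm e ^ 4)"
  proof
    fix e :: "real^2"
    have "1 * (e$1)^4 + 2 * ((e$1)\<^sup>2 * (e$2)\<^sup>2) + 1 * (e$2)^4 = ((norm e)\<^sup>2)\<^sup>2"
      unfolding norm_vec2_squared by algebra
    \<comment> \<open>this also holds at e = 0, where both sides are 0 since x / 0 = 0\<close>
    then show "(1 * (e$1)^4 + 2 * ((e$1)\<^sup>2 * (e$2)\<^sup>2) + 1 * (e$2)^4) / norm e ^ 8 = 1 / norm e ^ 4"
      by (cases "e = 0") (simp_all add: field_simps flip: power_mult power_add)
  qed
  then have "P + 2 * M + Q = pi * (1 / a\<^sup>2 - 1 / b\<^sup>2)"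
    using annulus_integral_quartic[OF assms(1), of b 1 2 1] annulus_integral_inverse_pow4[OF assms]
    by (simp add: P_def M_def Q_def)
  moreover have "M = P / 4 - M / 2 + Q / 4"
    \<comment> \<open>in the diagonal frame e1^2 e2^2 becomes (e1^2 - e2^2)^2 / 4\<close>
  proof -
    let ?u = "vector [1 / sqrt 2, 1 / sqrt 2] :: real^2" and ?w = "vector [1 / sqrt 2, - 1 / sqrt 2] :: real^2"
    have "?u \<bullet> ?u = 1" "?w \<bullet> ?w = 1" "?u \<bullet> ?w = 0"
      by (simp_all add: inner_vec2 power2_eq_square[symmetric] power_divide)
    then have "M = annulus_integral a b (\<lambda>e. (e \<bullet> ?u)\<^sup>2 * (e \<bullet> ?w)\<^sup>2 / norm e ^ 8)"
      unfolding M_def by (rule annulus_integral_change_frame[symmetric]) measurable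
    also have "(\<lambda>e::real^2. (e \<bullet> ?u)\<^sup>2 * (e \<bullet> ?w)\<^sup>2 / norm e ^ 8) =
        (\<lambda>e. (1 / 4 * (e$1)^4 + (- 1 / 2) * ((e$1)\<^sup>2 * (e$2)\<^sup>2) + 1 / 4 * (e$2)^4) / norm e ^ 8)"
      by (simp add: fun_eq_iff inner_vec2 field_simps power2_eq_square power4_eq_xxxx)
    finally show ?thesis
      using annulus_integral_quartic[OF assms(1), of b "1 / 4" "- 1 / 2" "1 / 4"] by (simp add: P_def M_def Q_def)
  qed
  moreover have "M = d / 8 \<and> P = 3 * d / 8" if "P + 2 * M + Q = d" "M = P / 4 - M / 2 + Q / 4" for d
    using that \<open>Q = P\<close> by (intro conjI) linarith+
  ultimately show "annulus_integral a b (\<lambda>e. (e$1)\<^sup>2 * (e$2)\<^sup>2 / norm e ^ 8) = pi * (1 / a\<^sup>2 - 1 / b\<^sup>2) / 8"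
    and "annulus_integral a b (\<lambda>e. (e$1)^4 / norm e ^ 8) = 3 * pi * (1 / a\<^sup>2 - 1 / b\<^sup>2) / 8"
    unfolding M_def P_def by auto
  have "X = annulus_integral a b (\<lambda>e. (e$1)^3 * (- e$2) / norm e ^ 8)"
    using annulus_integral_change_frame[of "vector [1, 0]" "vector [0, - 1]" "\<lambda>x y. x^3 * y" a b]
    by (simp add: X_def inner_vec2)
  also have "\<dots> = - X"
    unfolding X_def using annulus_integral_cmult[of a b "- 1"] by simp
  finally show "annulus_integral a b (\<lambda>e. (e$1)^3 * e$2 / norm e ^ 8) = 0"
    unfolding X_def by simp
qed

section \<open>The expected matrix and its smallest eigenvalue\<close>

lemma outer_product_mult_vec2: "(\<chi> i j. d$i * d$j) *v y = (d \<bullet> y) *\<^sub>R (d::real^2)"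
  by (simp add: vec_eq_iff matrix_vector_mult_def inner_vec2 forall_2 sum_2 algebra_simps)

lemma summand_bilinear:
  "x \<bullet> (summand v d *v y) = ((d \<bullet> v) / norm v)\<^sup>2 / norm d ^ 8 * ((norm d)\<^sup>2 * (x \<bullet> y) - (d \<bullet> x) * (d \<bullet> y))"
  by (simp add: summand_def scaleR_matrix_vector_assoc[symmetric] matrix_vector_mult_diff_rdistrib
      outer_product_mult_vec2 inner_diff_right inner_commute)

lemma continuous_on_summand_annulus:
  assumes "0 < a" "v \<noteq> 0"
  shows "continuous_on (annulus a b) (summand v)"
  unfolding summand_def[abs_def] using assms
  by (intro continuous_intros continuous_on_vec_lambda) (auto simp: annulus_def)

definition annulus_summand_integral :: "real \<Rightarrow> real \<Rightarrow> real^2 \<Rightarrow> real^2^2" where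
  "annulus_summand_integral a b v = (\<integral>e. indicator (annulus a b) e *\<^sub>R summand v e \<partial>lborel)"

lemma annulus_summand_integral_bilinear:
  assumes "0 < a" "v \<noteq> 0"
  shows "x \<bullet> (annulus_summand_integral a b v *v y) = annulus_integral a b
    (\<lambda>e. ((e \<bullet> v) / norm v)\<^sup>2 * ((norm e)\<^sup>2 * (x \<bullet> y) - (e \<bullet> x) * (e \<bullet> y)) / norm e ^ 8)"
proof -
  have "bounded_linear (\<lambda>A::real^2^2. x \<bullet> (A *v y))"
    by (auto simp: linear_conv_bounded_linear[symmetric] matrix_vector_mult_add_rdistrib inner_add_right
        scaleR_matrix_vector_assoc[symmetric] intro!: linearI)
  then have "x \<bullet> (annulus_summand_integral a b v *v y) =
      (\<integral>e. x \<bullet> ((indicator (annulus a b) e *\<^sub>R summand v e) *v y) \<partial>lborel)"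
    unfolding annulus_summand_integral_def
    using borel_integrable_compact[OF compact_annulus continuous_on_summand_annulus[OF assms]]
    by (rule integral_bounded_linear[symmetric])
  then show ?thesis
    by (simp add: annulus_integral_def scaleR_matrix_vector_assoc[symmetric] summand_bilinear)
qed

lemma annulus_summand_integral_eigenvectors:
  assumes "0 < a" "a \<le> b" "v \<noteq> 0"
    and u_def: "u = v /\<^sub>R norm v" and w_def: "w = vector [- u$2, u$1]"
  shows "u \<bullet> u = 1" "w \<bullet> w = 1" "u \<bullet> w = 0"
    and "annulus_summand_integral a b v *v u = (pi * (1 / a\<^sup>2 - 1 / b\<^sup>2) / 8) *\<^sub>R u"
    and "annulus_summand_integral a b v *v w = (3 * pi * (1 / a\<^sup>2 - 1 / b\<^sup>2) / 8) *\<^sub>R w"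
proof -
  define K where "K = annulus_summand_integral a b v"
  show uu: "u \<bullet> u = 1"
    unfolding u_def using assms(3) by (simp add: dot_square_norm)
  then show ww: "w \<bullet> w = 1" and uw: "u \<bullet> w = 0"
    unfolding w_def by (simp_all add: inner_vec2 algebra_simps)
  note frame = uu ww uw
  have ev: "(e \<bullet> v) / norm v = e \<bullet> u" for e
    by (simp add: u_def divide_inverse_commute)
  have parseval: "(norm e)\<^sup>2 = (e \<bullet> u)\<^sup>2 + (e \<bullet> w)\<^sup>2" for e
    unfolding power2_norm_eq_inner using orthonormal2_parseval[OF frame, of e e] by (simp add: power2_eq_square)
  have entry: "x \<bullet> (K *v y) = annulus_integral a b (\<lambda>e. F (e$1) (e$2) / norm e ^ 8)"
    if F: "continuous_on UNIV (\<lambda>e::real^2. F (e$1) (e$2))"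
      and eq: "\<And>e. (e \<bullet> u)\<^sup>2 * (((e \<bullet> u)\<^sup>2 + (e \<bullet> w)\<^sup>2) * (x \<bullet> y) - (e \<bullet> x) * (e \<bullet> y)) =
        F (e \<bullet> u) (e \<bullet> w)"
    for x y and F :: "real \<Rightarrow> real \<Rightarrow> real"
  proof -
    have "x \<bullet> (K *v y) = annulus_integral a b (\<lambda>e. F (e \<bullet> u) (e \<bullet> w) / norm e ^ 8)"
      by (simp add: K_def annulus_summand_integral_bilinear[OF assms(1,3)] ev parseval eq)
    also have "\<dots> = annulus_integral a b (\<lambda>e. F (e$1) (e$2) / norm e ^ 8)"
      using F by (intro annulus_integral_change_frame[OF frame] borel_measurable_continuous_onI)
    finally show ?thesis .
  qed
  have "u \<bullet> (K *v u) = annulus_integral a b (\<lambda>e. (e$1)\<^sup>2 * (e$2)\<^sup>2 / norm e ^ 8)"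
    by (intro entry continuous_intros) (simp add: frame algebra_simps power2_eq_square)
  moreover have "w \<bullet> (K *v u) = annulus_integral a b (\<lambda>e. - 1 * ((e$1)^3 * e$2) / norm e ^ 8)"
    by (intro entry continuous_intros) (simp add: frame inner_commute algebra_simps power2_eq_square power3_eq_cube)
  moreover have "u \<bullet> (K *v w) = annulus_integral a b (\<lambda>e. - 1 * ((e$1)^3 * e$2) / norm e ^ 8)"
    by (intro entry continuous_intros) (simp add: frame inner_commute algebra_simps power2_eq_square power3_eq_cube)
  moreover have "w \<bullet> (K *v w) = annulus_integral a b (\<lambda>e. (e$1)^4 / norm e ^ 8)"
    by (intro entry continuous_intros) (simp add: frame algebra_simps power2_eq_square power4_eq_xxxx)
  ultimately have "u \<bullet> (K *v u) = pi * (1 / a\<^sup>2 - 1 / b\<^sup>2) / 8" "w \<bullet> (K *v u) = 0"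
    "u \<bullet> (K *v w) = 0" "w \<bullet> (K *v w) = 3 * pi * (1 / a\<^sup>2 - 1 / b\<^sup>2) / 8"
    using annulus_moments[OF assms(1,2)] annulus_integral_cmult[of a b "- 1"] by simp_all
  note entries = this
  have decomposition: "K *v z = (u \<bullet> (K *v z)) *\<^sub>R u + (w \<bullet> (K *v z)) *\<^sub>R w" for z
    using orthonormal2_decomposition[OF frame, of "K *v z"] by (simp only: inner_commute)
  have "K *v u = (pi * (1 / a\<^sup>2 - 1 / b\<^sup>2) / 8) *\<^sub>R u"
    "K *v w = (3 * pi * (1 / a\<^sup>2 - 1 / b\<^sup>2) / 8) *\<^sub>R w"
    using decomposition[of u] decomposition[of w] entries by simp_all
  then show "annulus_summand_integral a b v *v u = (pi * (1 / a\<^sup>2 - 1 / b\<^sup>2) / 8) *\<^sub>R u"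
    and "annulus_summand_integral a b v *v w = (3 * pi * (1 / a\<^sup>2 - 1 / b\<^sup>2) / 8) *\<^sub>R w"
    unfolding K_def .
qed

lemma lambda_min_orthonormal_eigenvectors:
  fixes B :: "real^2^2" and u w :: "real^2"
  assumes frame: "u \<bullet> u = 1" "w \<bullet> w = 1" "u \<bullet> w = 0"
    and Bu: "B *v u = \<alpha> *\<^sub>R u" and Bw: "B *v w = \<beta> *\<^sub>R w" and "\<alpha> \<le> \<beta>"
  shows "lambda_min B = \<alpha>"
proof -
  let ?E = "{l. \<exists>z. z \<noteq> 0 \<and> B *v z = l *\<^sub>R z}"
  have "?E \<subseteq> {\<alpha>, \<beta>}"
  proof
    fix l assume "l \<in> ?E"
    then obtain z where z: "z \<noteq> 0" "B *v z = l *\<^sub>R z"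
      by auto
    have "B *v z = (\<alpha> * (z \<bullet> u)) *\<^sub>R u + (\<beta> * (z \<bullet> w)) *\<^sub>R w"
      by (subst orthonormal2_decomposition[OF frame, of z])
        (simp add: matrix_vector_right_distrib matrix_vector_mult_scaleR Bu Bw mult.commute)
    then have eq: "l *\<^sub>R z = (\<alpha> * (z \<bullet> u)) *\<^sub>R u + (\<beta> * (z \<bullet> w)) *\<^sub>R w"
      using z(2) by simp
    have "l * (z \<bullet> u) = \<alpha> * (z \<bullet> u)" "l * (z \<bullet> w) = \<beta> * (z \<bullet> w)"
      using arg_cong[OF eq, of "\<lambda>y. y \<bullet> u"] arg_cong[OF eq, of "\<lambda>y. y \<bullet> w"] frame
      by (simp_all add: inner_add_left inner_add_right inner_commute)
    moreover have "z \<bullet> u \<noteq> 0 \<or> z \<bullet> w \<noteq> 0"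
      using orthonormal2_decomposition[OF frame, of z] z(1) by auto
    ultimately show "l \<in> {\<alpha>, \<beta>}"
      by auto
  qed
  moreover have "\<alpha> \<in> ?E"
    using Bu frame(1) by (intro CollectI exI[of _ u]) auto
  ultimately show ?thesis
    unfolding lambda_min_def using assms(6) by (intro Min_eqI) (auto intro: finite_subset)
qed

lemma expected_annulus_summand_sum:
  assumes P: "poisson_point_process M Phi kappa" and "0 \<le> kappa"
    and "0 < r0" and "v \<noteq> 0"
  shows "(\<integral>\<omega>. (\<Sum>p\<in>{p \<in> Phi \<omega>. r0 \<le> norm (c - p) \<and> norm (c - p) \<le> R}. summand v (c - p)) \<partial>M) =
    kappa *\<^sub>R annulus_summand_integral r0 R v"
proof -
  define g where "g e = indicator (annulus r0 R) e *\<^sub>R summand v e" for e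
  define S where "S = (\<lambda>p. c - p) -` annulus r0 R"
  have cont: "continuous_on (annulus r0 R) (summand v)"
    using continuous_on_summand_annulus assms(3,4) .
  then obtain B where B: "0 < B" "\<And>e. e \<in> annulus r0 R \<Longrightarrow> norm (summand v e) \<le> B"
    using compact_imp_bounded[OF compact_continuous_image[OF cont compact_annulus]]
    by (auto simp: bounded_pos)
  have g_meas [measurable]: "g \<in> borel_measurable borel"
    unfolding g_def using cont by (intro borel_measurable_continuous_on_indicator) simp_all
  have S_sets: "S \<in> sets borel"
    unfolding S_def using measurable_sets[of "\<lambda>p. c - p" borel borel "annulus r0 R"] by simp
  have S_bounded: "bounded S"
    by (rule bounded_subset[OF bounded_cball[of c R]]) (auto simp: S_def annulus_def dist_norm)
  have g_reflected_meas: "(\<lambda>p. g (c - p)) \<in> borel_measurable borel"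
    by measurable
  have "norm (g (c - p)) \<le> B" for p
    using B by (cases "c - p \<in> annulus r0 R") (auto simp: g_def)
  then have "(\<integral>\<omega>. (\<Sum>p\<in>Phi \<omega> \<inter> S. g (c - p)) \<partial>M) = kappa *\<^sub>R (\<integral>p. g (c - p) \<partial>lborel)"
    by (intro campbell_formula(2)[OF P assms(2) S_sets S_bounded g_reflected_meas]) (auto simp: g_def S_def)
  moreover have "{p \<in> Phi \<omega>. r0 \<le> norm (c - p) \<and> norm (c - p) \<le> R} = Phi \<omega> \<inter> S" for \<omega>
    by (auto simp: S_def annulus_def)
  moreover have "g (c - p) = summand v (c - p)" if "p \<in> S" for p
    using that by (simp add: g_def S_def)
  ultimately show ?thesis
    using lborel_integral_reflect[OF g_meas, of c]
    by (simp add: annulus_summand_integral_def g_def[abs_def])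
qed

lemma A_tilde_eq:
  assumes "poisson_point_process M Phi kappa" and "0 \<le> kappa" and "0 < r0" and "v \<noteq> 0"
  shows "A_tilde M Phi r0 R x v T = (real T * kappa) *\<^sub>R annulus_summand_integral r0 R v"
  unfolding A_tilde_def expected_annulus_summand_sum[OF assms]
  by (simp only: sum_constant_scaleR card_atLeastAtMost) simp

lemma lambda_min_A_tilde:
  assumes "poisson_point_process M Phi kappa" and "0 \<le> kappa" and "0 < r0" and "r0 \<le> R" and "v \<noteq> 0"
  shows "lambda_min (A_tilde M Phi r0 R x v T) = real T * kappa * (pi * (1 / r0\<^sup>2 - 1 / R\<^sup>2) / 8)"
proof -
  define u where "u = v /\<^sub>R norm v"
  define w where "w = (vector [- u$2, u$1] :: real^2)"
  define d where "d = pi * (1 / r0\<^sup>2 - 1 / R\<^sup>2)"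
  note eigen = annulus_summand_integral_eigenvectors[OF assms(3-5) u_def w_def]
  have "0 \<le> d"
    using assms(3,4) by (simp add: d_def field_simps power_mono)
  show ?thesis
    unfolding d_def[symmetric]
  proof (rule lambda_min_orthonormal_eigenvectors[OF eigen(1-3)])
    show "A_tilde M Phi r0 R x v T *v u = (real T * kappa * (d / 8)) *\<^sub>R u"
      "A_tilde M Phi r0 R x v T *v w = (real T * kappa * (3 * d / 8)) *\<^sub>R w"
      using eigen(4,5)
      by (simp_all add: A_tilde_eq[OF assms(1-3,5)] scaleR_matrix_vector_assoc[symmetric] d_def)
    show "real T * kappa * (d / 8) \<le> real T * kappa * (3 * d / 8)"
      using \<open>0 \<le> d\<close> assms(2) by (intro mult_left_mono) auto
  qed
qed

theorem lemma7:
  fixes M :: "'s measure" and Phi :: "'s \<Rightarrow> (real^2) set"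
    and kappa r0 R :: real and x v :: "real^2"
  assumes "poisson_point_process M Phi kappa"
    and "kappa > 0" and "0 < r0" and "r0 < R" and "v \<noteq> 0"
  shows "(\<lambda>T. lambda_min (A_tilde M Phi r0 R x v T) / real T)
           \<longlonglongrightarrow> pi * kappa * (1 / r0\<^sup>2 - 1 / R\<^sup>2) / 8"
proof (rule tendsto_eventually, rule eventually_sequentiallyI)
  fix T :: nat
  assume "1 \<le> T"
  then show "lambda_min (A_tilde M Phi r0 R x v T) / real T = pi * kappa * (1 / r0\<^sup>2 - 1 / R\<^sup>2) / 8"
    using lambda_min_A_tilde[OF assms(1) less_imp_le[OF assms(2)] assms(3) less_imp_le[OF assms(4)] assms(5)]
    by simp
qed

end
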